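(* Let $(X,\mathcal{B},T,\mu)$ be a measure-preserving dynamical system with $\mu(X)=1$, let $(Y,\mathcal{C})$ be a measurable space, and let $\tilde{T}(x,y)=(T(x),\varphi_x(y))$ be a skew product on $X\times Y$ for a family of measurable maps $\varphi_x:Y\to Y$, with a $\tilde{T}$-invariant probability measure $\Theta$ on $X\times Y$ satisfying $\Pi_X^*(\Theta)=\mu$. Let $(\Theta_x)_{x\in X}$ be the disintegration of $\Theta$ with respect to $\mu$. Let $\Omega=\prod_{n\in\mathbb{N}}Y$ with the left shift $\sigma(y_1,y_2,\dots)=(y_2,y_3,\dots)$, let $\hat{T}(x,\omega)=(T(x),\sigma(\omega))$ on $X\times\Omega$, and let $\mathbb{Q}(dx,d\omega)=\mu(dx)\mathbb{Q}_x(d\omega)$ where $\mathbb{Q}_x=\prod_{k=1}^\infty\Theta_{T^{k-1}(x)}$. Let $h:X\times Y\to\mathbb{R}$ be measurable and assume: (1) for $\mu$-a.e. $x\in X$, $h(x,\cdot)$ is not $\Theta_x$-a.s. equal to a constant; (2) $h\in L^1(\Theta)$, $\int_{X\times Y}h\,d\Theta=0$, and $\mathbb{Q}$ is $\hat{T}$-ergodic. Then for $\mu$-a.e. $x\in X$ and for $\prod_{k=1}^\infty\Theta_{T^{k-1}(x)}$-a.e. $(y_k)_{k\in\mathbb{N}}\in\prod_{\mathbb{N}}Y$, \[\liminf_{n\to\infty}\sum_{k=1}^n h(T^{k-1}(x),y_k)=-\infty\quad\text{and}\quad\limsup_{n\to\infty}\sum_{k=1}^n h(T^{k-1}(x),y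_k)=+\infty.\]
   Context: The disintegration $(\Theta_x)$ of $\Theta$ with respect to $\mu$ is the family of probability measures on $Y$, defined for $\mu$-a.e. $x$, with $x\mapsto\Theta_x(C)$ measurable and $\int H\,d\Theta=\int_X\int_Y H(x,y)\,\Theta_x(dy)\,\mu(dx)$ for measurable $H\ge0$. $\Pi_X$ denotes the projection onto $X$. In this setting $\mathbb{Q}$ is a $\hat{T}$-invariant probability measure on $X\times\Omega$. *)

theory Defs
  imports "HOL-Probability.Probability"
begin

definition preserves :: "'a measure \<Rightarrow> ('a \<Rightarrow> 'a) \<Rightarrow> bool" where
  "preserves P f \<longleftrightarrow> f \<in> P \<rightarrow>\<^sub>M P \<and> distr P P f = P"

definition ergodic :: "'a measure \<Rightarrow> ('a \<Rightarrow> 'a) \<Rightarrow> bool" where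
  "ergodic P f \<longleftrightarrow> preserves P f \<and>
     (\<forall>A \<in> sets P. f -` A \<inter> space P = A \<longrightarrow> measure P A = 0 \<or> measure P A = 1)"

text \<open>Fibre measure Q_x = prod_k Theta_{T^k x} (0-indexed: coordinate k carries
  Theta_{T^k x}, i.e. y_{k+1} in the paper's 1-indexed notation).\<close>
definition fibre_measure :: "('a \<Rightarrow> 'a) \<Rightarrow> ('a \<Rightarrow> 'b measure) \<Rightarrow> 'a \<Rightarrow> (nat \<Rightarrow> 'b) measure" where
  "fibre_measure T K x = PiM UNIV (\<lambda>k. K ((T ^^ k) x))"

text \<open>Q(dx,d omega) = mu(dx) Q_x(d omega) on X \<times> Omega.\<close>
definition skew_measure :: "'a measure \<Rightarrow> 'b measure \<Rightarrow> ('a \<Rightarrow> 'a) \<Rightarrow> ('a \<Rightarrow> 'b measure)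
    \<Rightarrow> ('a \<times> (nat \<Rightarrow> 'b)) measure" where
  "skew_measure M N T K = M \<bind> (\<lambda>x. distr (fibre_measure T K x)
      (M \<Otimes>\<^sub>M PiM UNIV (\<lambda>_. N)) (\<lambda>\<omega>. (x, \<omega>)))"

definition shift_hat :: "('a \<Rightarrow> 'a) \<Rightarrow> 'a \<times> (nat \<Rightarrow> 'b) \<Rightarrow> 'a \<times> (nat \<Rightarrow> 'b)" where
  "shift_hat T = (\<lambda>(x, \<omega>). (T x, \<lambda>k. \<omega> (Suc k)))"

end

theory Submission
  imports Defs
begin

(*
  Write S_n(x, omega) = sum_{k<n} h(T^k x, omega_k).  These are the Birkhoff sums of
  f(x, omega) = h(x, omega_0) for the shift R(x, omega) = (T x, sigma omega) (shift_hat T) on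
  (X x Omega, Q), and f has Q-mean 0 because, given x, omega_0 is distributed according to Theta_x.
  As limsup S_n = f + (limsup S_n) o R, ergodicity of Q makes limsup S_n almost surely +oo,
  almost surely -oo, or almost surely finite.

  It is not -oo: otherwise W = sup_n S_n is finite and W = max 0 (f + W o R), so the coboundary
  W o R - W is bounded above by -f.  A coboundary with an integrable upper bound has mean 0, hence
  W o R - W = -f almost surely and W tends to +oo along almost every orbit, which is impossible
  for a measure-preserving map.

  It is not finite: otherwise G = limsup S_n satisfies G = f + G o R.  Since Q_x is the product
  of Theta_x and Q_(T x), the characteristic function phi_x of G(x, -) under Q_x factors as
  phi_x = psi_x * phi_(T x), where psi_x is the characteristic function of h(x, -) under Theta_x.
  As T preserves mu, |phi_x| = |phi_(T x)| almost everywhere, so |psi_x(t)| = 1 for all small t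
  and h(x, -) is Theta_x-almost surely constant, contradicting hypothesis (1).

  So limsup S_n = +oo almost surely; the same applied to -h gives liminf S_n = -oo.
*)

section \<open>Truncated coboundaries of measure-preserving maps\<close>

definition clip :: "real \<Rightarrow> real \<Rightarrow> real" where
  "clip c a = max (- c) (min c a)"

lemma clip_eq: "\<bar>a\<bar> \<le> c \<Longrightarrow> clip c a = a"
  by (simp add: clip_def)

lemma abs_clip_le: "\<bar>clip c a\<bar> \<le> \<bar>c\<bar>"
  by (simp add: clip_def)

lemma clip_diff_le:
  shows "max (clip c b - clip c a) 0 \<le> max (b - a) 0"
    and "\<bar>clip c b - clip c a\<bar> \<le> \<bar>b - a\<bar>"
  by (simp_all add: clip_def)

lemma tendsto_clip: "(\<lambda>n. clip (real n) a) \<longlonglongrightarrow> a"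
proof (rule tendsto_eventually)
  obtain n0 :: nat where "\<bar>a\<bar> \<le> real n0" using real_arch_simple by blast
  then show "\<forall>\<^sub>F n in sequentially. clip (real n) a = a"
    by (auto simp: eventually_sequentially intro!: exI[of _ n0] clip_eq)
qed

lemma borel_measurable_clip[measurable (raw)]:
  assumes [measurable]: "f \<in> borel_measurable M"
  shows "(\<lambda>x. clip c (f x)) \<in> borel_measurable M"
  unfolding clip_def by measurable

lemma preserves_measurable: "preserves P S \<Longrightarrow> S \<in> P \<rightarrow>\<^sub>M P"
  by (simp add: preserves_def)

lemma preserves_integral_comp:
  fixes g :: "_ \<Rightarrow> 'b::{banach, second_countable_topology}"
  assumes "preserves P S" and "g \<in> borel_measurable P"
  shows "(\<integral>z. g (S z) \<partial>P) = (\<integral>z. g z \<partial>P)"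
  using assms integral_distr[of S P P g] by (simp add: preserves_def)

lemma preserves_funpow: "preserves P S \<Longrightarrow> preserves P (S ^^ n)"
proof (induction n)
  case (Suc n)
  then have S: "S \<in> P \<rightarrow>\<^sub>M P" "distr P P S = P"
    and Sn: "S ^^ n \<in> P \<rightarrow>\<^sub>M P" "distr P P (S ^^ n) = P"
    by (simp_all add: preserves_def)
  have "distr P P (S ^^ Suc n) = distr (distr P P (S ^^ n)) P S"
    using distr_distr[OF S(1) Sn(1)] by (simp add: comp_def)
  also have "\<dots> = P"
    unfolding Sn(2) by (fact S(2))
  finally show ?case
    using measurable_compose_n[OF S(1)] unfolding preserves_def by blast
qed (simp add: preserves_def id_def)

lemma preserves_AE_comp:
  assumes S: "preserves P S" and [measurable]: "Measurable.pred P Q" and "AE z in P. Q z"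
  shows "AE z in P. Q (S z)"
proof -
  have "AE z in distr P P S. Q z"
    using S \<open>AE z in P. Q z\<close> unfolding preserves_def by metis
  then show ?thesis
    using S by (simp add: AE_distr_iff preserves_def)
qed

lemma has_bochner_integral_truncated_coboundary:
  fixes g :: "_ \<Rightarrow> real"
  assumes "finite_measure P" and S: "preserves P S" and [measurable]: "g \<in> borel_measurable P"
  shows "has_bochner_integral P (\<lambda>z. clip c (g (S z)) - clip c (g z)) 0"
proof -
  interpret finite_measure P by fact
  have [measurable]: "S \<in> P \<rightarrow>\<^sub>M P" using S by (rule preserves_measurable)
  have bounded: "integrable P (\<lambda>z. clip c (u z))" if [measurable]: "u \<in> borel_measurable P" for u
    by (rule integrable_const_bound[where B="\<bar>c\<bar>"]) (simp_all add: abs_clip_le)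
  have "integrable P (\<lambda>z. clip c (g (S z)))" "integrable P (\<lambda>z. clip c (g z))"
    by (simp_all add: bounded)
  moreover have "(\<integral>z. clip c (g (S z)) \<partial>P) = (\<integral>z. clip c (g z) \<partial>P)"
    by (rule preserves_integral_comp[OF S]) measurable
  ultimately show ?thesis
    by (simp add: has_bochner_integral_iff)
qed

lemma nn_integral_neg_eq_nn_integral:
  fixes u :: "_ \<Rightarrow> real"
  assumes "has_bochner_integral P u 0"
  shows "(\<integral>\<^sup>+z. ennreal (- u z) \<partial>P) = (\<integral>\<^sup>+z. ennreal (u z) \<partial>P)"
proof -
  from integrable.intros[OF assms] obtain r q where "0 \<le> r" "0 \<le> q"
    "(\<integral>\<^sup>+z. ennreal (u z) \<partial>P) = ennreal r" "(\<integral>\<^sup>+z. ennreal (- u z) \<partial>P) = ennreal q"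
    "(\<integral>z. u z \<partial>P) = r - q"
    by (rule integrableE)
  with has_bochner_integral_integral_eq[OF assms] show ?thesis
    by simp
qed

(* Truncation at level n commutes with composition by S, so every truncated coboundary has
   integral 0; Fatou's lemma carries this balance of positive and negative parts to the limit. *)
lemma nn_integral_coboundary_neg_le:
  fixes g :: "_ \<Rightarrow> real"
  assumes P: "finite_measure P" and S: "preserves P S" and [measurable]: "g \<in> borel_measurable P"
  shows "(\<integral>\<^sup>+z. ennreal (g z - g (S z)) \<partial>P) \<le> (\<integral>\<^sup>+z. ennreal (g (S z) - g z) \<partial>P)"
proof -
  have [measurable]: "S \<in> P \<rightarrow>\<^sub>M P" using S by (rule preserves_measurable)
  define dn where "dn n z = clip (real n) (g (S z)) - clip (real n) (g z)" for n z
  have [measurable]: "dn n \<in> borel_measurable P" for n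
    unfolding dn_def by measurable
  have "(\<integral>\<^sup>+z. ennreal (- dn n z) \<partial>P) = (\<integral>\<^sup>+z. ennreal (dn n z) \<partial>P)" for n
    unfolding dn_def
    by (intro nn_integral_neg_eq_nn_integral has_bochner_integral_truncated_coboundary P S)
      measurable
  moreover have "(\<integral>\<^sup>+z. ennreal (dn n z) \<partial>P) \<le> (\<integral>\<^sup>+z. ennreal (g (S z) - g z) \<partial>P)" for n
  proof (intro nn_integral_mono)
    fix z
    have "max (dn n z) 0 \<le> max (g (S z) - g z) 0"
      unfolding dn_def by (rule clip_diff_le)
    then show "ennreal (dn n z) \<le> ennreal (g (S z) - g z)"
      by (metis ennreal_leI ennreal_max_0 max.commute)
  qed
  ultimately have dn_neg: "(\<integral>\<^sup>+z. ennreal (- dn n z) \<partial>P) \<le> (\<integral>\<^sup>+z. ennreal (g (S z) - g z) \<partial>P)" for n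
    by simp
  have "(\<integral>\<^sup>+z. ennreal (g z - g (S z)) \<partial>P) = (\<integral>\<^sup>+z. liminf (\<lambda>n. ennreal (- dn n z)) \<partial>P)"
    unfolding dn_def
    by (intro nn_integral_cong lim_imp_Liminf[symmetric] tendsto_ennrealI)
      (auto intro!: tendsto_eq_intros tendsto_clip)
  also have "\<dots> \<le> liminf (\<lambda>n. \<integral>\<^sup>+z. ennreal (- dn n z) \<partial>P)"
    by (intro nn_integral_liminf) measurable
  also have "\<dots> \<le> (\<integral>\<^sup>+z. ennreal (g (S z) - g z) \<partial>P)"
    using dn_neg by (intro Liminf_le always_eventually allI) simp_all
  finally show ?thesis .
qed

lemma integrable_coboundary:
  fixes g :: "_ \<Rightarrow> real"
  assumes P: "finite_measure P" and S: "preserves P S" and g: "g \<in> borel_measurable P"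
    and F: "integrable P F" and le: "AE z in P. g (S z) - g z \<le> F z"
  shows "integrable P (\<lambda>z. g (S z) - g z)"
proof -
  have "(\<integral>\<^sup>+z. ennreal (g (S z) - g z) \<partial>P) \<le> (\<integral>\<^sup>+z. ennreal (F z) \<partial>P)"
    using le by (intro nn_integral_mono_AE) (auto elim!: eventually_mono intro: ennreal_leI)
  then have pos: "(\<integral>\<^sup>+z. ennreal (g (S z) - g z) \<partial>P) \<noteq> \<infinity>"
    using integrableD(2)[OF F] by (auto simp: top_unique)
  then have "(\<integral>\<^sup>+z. ennreal (g z - g (S z)) \<partial>P) \<noteq> \<infinity>"
    using nn_integral_coboundary_neg_le[OF P S g] by (auto simp: top_unique)
  moreover have "(\<lambda>z. g (S z) - g z) \<in> borel_measurable P"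
    using g preserves_measurable[OF S] by measurable
  ultimately show ?thesis
    using pos by (simp add: real_integrable_def)
qed

lemma integral_coboundary_eq_0:
  fixes g :: "_ \<Rightarrow> real"
  assumes P: "finite_measure P" and S: "preserves P S" and [measurable]: "g \<in> borel_measurable P"
    and "integrable P F" and "AE z in P. g (S z) - g z \<le> F z"
  shows "(\<integral>z. g (S z) - g z \<partial>P) = 0"
proof -
  have [measurable]: "S \<in> P \<rightarrow>\<^sub>M P" using S by (rule preserves_measurable)
  have "(\<lambda>n. \<integral>z. clip (real n) (g (S z)) - clip (real n) (g z) \<partial>P) \<longlonglongrightarrow> (\<integral>z. g (S z) - g z \<partial>P)"
  proof (rule integral_dominated_convergence[where w="\<lambda>z. \<bar>g (S z) - g z\<bar>"])
    show "integrable P (\<lambda>z. \<bar>g (S z) - g z\<bar>)"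
      using integrable_coboundary[OF assms] by simp
    show "AE z in P. (\<lambda>n. clip (real n) (g (S z)) - clip (real n) (g z)) \<longlonglongrightarrow> g (S z) - g z"
      by (intro AE_I2 tendsto_diff tendsto_clip)
    show "AE z in P. norm (clip (real n) (g (S z)) - clip (real n) (g z)) \<le> \<bar>g (S z) - g z\<bar>" for n
      by (intro AE_I2) (simp add: clip_diff_le(2))
  qed measurable
  moreover have "(\<integral>z. clip (real n) (g (S z)) - clip (real n) (g z) \<partial>P) = 0" for n
    by (intro has_bochner_integral_integral_eq has_bochner_integral_truncated_coboundary P S)
      measurable
  ultimately show ?thesis
    by (simp add: LIMSEQ_const_iff)
qed

lemma AE_coboundary_eq:
  fixes g F :: "_ \<Rightarrow> real"
  assumes P: "finite_measure P" and S: "preserves P S" and g: "g \<in> borel_measurable P"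
    and F: "integrable P F" and F_0: "(\<integral>z. F z \<partial>P) = 0"
    and le: "AE z in P. g (S z) - g z \<le> F z"
  shows "AE z in P. g (S z) - g z = F z"
proof -
  have "integrable P (\<lambda>z. F z - (g (S z) - g z))"
    using F integrable_coboundary[OF P S g F le] by simp
  moreover have "(\<integral>z. F z - (g (S z) - g z) \<partial>P) = 0"
    using integral_coboundary_eq_0[OF P S g F le] integrable_coboundary[OF P S g F le] F F_0
    by simp
  moreover have "AE z in P. 0 \<le> F z - (g (S z) - g z)"
    using le by eventually_elim simp
  ultimately have "AE z in P. F z - (g (S z) - g z) = 0"
    using integral_nonneg_eq_0_iff_AE by blast
  then show ?thesis
    by eventually_elim simp
qed

section \<open>Birkhoff sums\<close>

definition birkhoff_sum :: "('a \<Rightarrow> 'a) \<Rightarrow> ('a \<Rightarrow> real) \<Rightarrow> nat \<Rightarrow> 'a \<Rightarrow> real" where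
  "birkhoff_sum S f n z = (\<Sum>k<n. f ((S ^^ k) z))"

lemma birkhoff_sum_0 [simp]: "birkhoff_sum S f 0 z = 0"
  by (simp add: birkhoff_sum_def)

lemma birkhoff_sum_Suc: "birkhoff_sum S f (Suc n) z = f z + birkhoff_sum S f n (S z)"
  unfolding birkhoff_sum_def sum.lessThan_Suc_shift by (simp add: funpow_swap1)

lemma birkhoff_sum_Suc_right: "birkhoff_sum S f (Suc n) z = birkhoff_sum S f n z + f ((S ^^ n) z)"
  by (simp add: birkhoff_sum_def)

lemma borel_measurable_birkhoff_sum:
  assumes [measurable]: "S \<in> P \<rightarrow>\<^sub>M P" "f \<in> borel_measurable P"
  shows "birkhoff_sum S f n \<in> borel_measurable P"
  unfolding birkhoff_sum_def by measurable

lemma limsup_birkhoff_sum: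
  "limsup (\<lambda>n. ereal (birkhoff_sum S f n z))
     = ereal (f z) + limsup (\<lambda>n. ereal (birkhoff_sum S f n (S z)))"
proof -
  have "limsup (\<lambda>n. ereal (birkhoff_sum S f n z))
      = limsup (\<lambda>n. ereal (birkhoff_sum S f (Suc n) z))"
    using limsup_shift[of "\<lambda>n. ereal (birkhoff_sum S f n z)"] by simp
  also have "\<dots> = limsup (\<lambda>n. ereal (f z) + ereal (birkhoff_sum S f n (S z)))"
    by (simp add: birkhoff_sum_Suc)
  also have "\<dots> = ereal (f z) + limsup (\<lambda>n. ereal (birkhoff_sum S f n (S z)))"
    by (rule Limsup_add_ereal_left) simp_all
  finally show ?thesis .
qed

lemma liminf_ereal_eq_uminus_limsup:
  "liminf (\<lambda>n. ereal (X n)) = - limsup (\<lambda>n. ereal (- X n))"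
  using ereal_Limsup_uminus[of sequentially "\<lambda>n. ereal (X n)"] by simp

lemma ergodic_invariant_AE_cases:
  assumes "prob_space P" and S: "ergodic P S" and [measurable]: "Measurable.pred P Q"
    and inv: "\<And>z. z \<in> space P \<Longrightarrow> Q (S z) \<longleftrightarrow> Q z"
  shows "(AE z in P. Q z) \<or> (AE z in P. \<not> Q z)"
proof -
  interpret prob_space P by fact
  let ?A = "{z \<in> space P. Q z}"
  have "S \<in> P \<rightarrow>\<^sub>M P" using S by (simp add: ergodic_def preserves_def)
  then have "S -` ?A \<inter> space P = ?A"
    using inv by (auto dest: measurable_space)
  moreover have "?A \<in> sets P"
    by measurable
  ultimately have "measure P ?A = 0 \<or> measure P ?A = 1"
    using S unfolding ergodic_def by blast
  then show ?thesis
  proof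
    assume "measure P ?A = 0"
    then have "?A \<in> null_sets P"
      by (simp add: emeasure_eq_measure null_sets_def)
    then have "AE z in P. z \<notin> ?A"
      by (rule AE_not_in)
    then have "AE z in P. \<not> Q z"
      using AE_space by eventually_elim auto
    then show ?thesis ..
  next
    assume "measure P ?A = 1"
    then show ?thesis
      by (auto dest: AE_prob_1)
  qed
qed

lemma ergodic_limsup_birkhoff_sum_cases:
  fixes f :: "_ \<Rightarrow> real"
  assumes P: "prob_space P" and S: "ergodic P S" and [measurable]: "f \<in> borel_measurable P"
  defines "L z \<equiv> limsup (\<lambda>n. ereal (birkhoff_sum S f n z))"
  shows "(AE z in P. L z = \<infinity>) \<or> (AE z in P. L z = -\<infinity>) \<or> (AE z in P. \<bar>L z\<bar> \<noteq> \<infinity>)"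
proof -
  have [measurable]: "S \<in> P \<rightarrow>\<^sub>M P" using S by (simp add: ergodic_def preserves_def)
  have [measurable]: "birkhoff_sum S f n \<in> borel_measurable P" for n
    by (rule borel_measurable_birkhoff_sum) measurable
  have [measurable]: "L \<in> borel_measurable P"
    unfolding L_def by measurable
  have "L (S z) = c \<longleftrightarrow> L z = c" if "\<bar>c\<bar> = \<infinity>" for c z
    using that limsup_birkhoff_sum[of S f z] unfolding L_def[symmetric]
    by (cases "L (S z)") auto
  then have cases: "(AE z in P. L z = c) \<or> (AE z in P. L z \<noteq> c)" if "\<bar>c\<bar> = \<infinity>" for c
    using that by (intro ergodic_invariant_AE_cases[OF P S]) simp_all
  have "(AE z in P. L z = \<infinity>) \<or> (AE z in P. L z \<noteq> \<infinity>)"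
    and "(AE z in P. L z = -\<infinity>) \<or> (AE z in P. L z \<noteq> -\<infinity>)"
    by (rule cases, simp)+
  moreover have "AE z in P. \<bar>L z\<bar> \<noteq> \<infinity>"
    if "AE z in P. L z \<noteq> \<infinity>" "AE z in P. L z \<noteq> -\<infinity>"
    using that by eventually_elim (auto elim: ereal_cases)
  ultimately show ?thesis
    by blast
qed

lemma preserves_measure_sublevel_eq_0:
  fixes w :: "_ \<Rightarrow> real"
  assumes "prob_space P" and S: "preserves P S" and [measurable]: "w \<in> borel_measurable P"
    and escape: "AE z in P. filterlim (\<lambda>n. w ((S ^^ n) z)) at_top sequentially"
  shows "measure P {z \<in> space P. w z \<le> C} = 0"
proof -
  interpret prob_space P by fact
  have [measurable]: "S \<in> P \<rightarrow>\<^sub>M P" using S by (rule preserves_measurable)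
  define B where "B = {z \<in> space P. w z \<le> C}"
  have [measurable]: "B \<in> sets P"
    unfolding B_def by measurable
  have "(\<lambda>n. \<integral>z. indicator B ((S ^^ n) z) \<partial>P) \<longlonglongrightarrow> (\<integral>z. (0::real) \<partial>P)"
  proof (rule integral_dominated_convergence[where w="\<lambda>_. 1"])
    show "AE z in P. (\<lambda>n. indicator B ((S ^^ n) z) :: real) \<longlonglongrightarrow> 0"
      using escape
    proof eventually_elim
      case (elim z)
      then have "eventually (\<lambda>n. C < w ((S ^^ n) z)) sequentially"
        by (simp add: filterlim_at_top_dense)
      then have "eventually (\<lambda>n. indicator B ((S ^^ n) z) = (0::real)) sequentially"
        by eventually_elim (simp add: B_def)
      then show ?case
        by (rule tendsto_eventually)
    qed
    show "(\<lambda>z. indicator B ((S ^^ n) z) :: real) \<in> borel_measurable P" for n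
      by measurable
    show "AE z in P. norm (indicator B ((S ^^ n) z) :: real) \<le> 1" for n
      by (intro AE_I2) (simp add: indicator_def)
  qed simp_all
  moreover have "(\<integral>z. indicator B ((S ^^ n) z) \<partial>P) = measure P B" for n
    using preserves_integral_comp[OF preserves_funpow[OF S], of "indicator B :: _ \<Rightarrow> real" n]
    by simp
  ultimately show ?thesis
    by (simp add: LIMSEQ_const_iff B_def)
qed

lemma preserves_not_AE_tendsto_at_top:
  fixes w :: "_ \<Rightarrow> real"
  assumes P: "prob_space P" and S: "preserves P S" and w: "w \<in> borel_measurable P"
  shows "\<not> (AE z in P. filterlim (\<lambda>n. w ((S ^^ n) z)) at_top sequentially)"
proof
  interpret prob_space P by fact
  assume "AE z in P. filterlim (\<lambda>n. w ((S ^^ n) z)) at_top sequentially"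
  then have "(\<Union>C::nat. {z \<in> space P. w z \<le> real C}) \<in> null_sets P"
    using preserves_measure_sublevel_eq_0[OF P S w] w
    by (intro null_sets_UN) (simp add: emeasure_eq_measure null_sets_def)
  moreover have "(\<Union>C::nat. {z \<in> space P. w z \<le> real C}) = space P"
    by (auto intro: real_arch_simple)
  ultimately have "emeasure P (space P) = 0"
    by (metis null_setsD1)
  then show False
    by (simp add: emeasure_space_1)
qed

lemma SUP_birkhoff_sum_Suc:
  "(SUP n. ereal (birkhoff_sum S f n z))
     = max 0 (ereal (f z) + (SUP n. ereal (birkhoff_sum S f n (S z))))"
proof -
  have "(SUP n. ereal (birkhoff_sum S f n z))
      = max (ereal (birkhoff_sum S f 0 z)) (SUP n. ereal (birkhoff_sum S f (Suc n) z))"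
    by (subst UNIV_nat_eq) (simp add: image_comp sup_max)
  also have "(SUP n. ereal (birkhoff_sum S f (Suc n) z))
      = ereal (f z) + (SUP n. ereal (birkhoff_sum S f n (S z)))"
    unfolding birkhoff_sum_Suc plus_ereal.simps(1)[symmetric]
    by (rule SUP_ereal_add_right) simp_all
  finally show ?thesis
    by (simp add: zero_ereal_def)
qed

lemma SUP_less_PInfty_if_limsup_MInfty:
  fixes X :: "nat \<Rightarrow> real"
  assumes "limsup (\<lambda>n. ereal (X n)) = -\<infinity>"
  shows "(SUP n. ereal (X n)) < \<infinity>"
proof -
  have "\<exists>N. \<forall>n\<ge>N. ereal (X n) \<le> ereal 0"
    using assms unfolding limsup_MInfty[symmetric] Lim_MInfty by blast
  then obtain N where N: "\<And>n. n \<ge> N \<Longrightarrow> X n \<le> 0"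
    by auto
  have "X n \<le> (\<Sum>k<N. \<bar>X k\<bar>)" for n
  proof (cases "n < N")
    case True
    then have "\<bar>X n\<bar> \<le> (\<Sum>k<N. \<bar>X k\<bar>)"
      by (intro member_le_sum) auto
    then show ?thesis by simp
  next
    case False
    then show ?thesis
      using N[of n] by (simp add: sum_nonneg order_trans)
  qed
  then have "(SUP n. ereal (X n)) \<le> ereal (\<Sum>k<N. \<bar>X k\<bar>)"
    by (intro SUP_least) simp
  then show ?thesis
    using order_le_less_trans by fastforce
qed

lemma filterlim_at_top_iterates_coboundary:
  fixes w f :: "_ \<Rightarrow> real"
  assumes coboundary: "\<forall>k. w (S ((S ^^ k) z)) - w ((S ^^ k) z) = - f ((S ^^ k) z)"
    and "limsup (\<lambda>n. ereal (birkhoff_sum S f n z)) = -\<infinity>"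
  shows "filterlim (\<lambda>n. w ((S ^^ n) z)) at_top sequentially"
proof -
  have w_iter: "w ((S ^^ n) z) = w z - birkhoff_sum S f n z" for n
    using coboundary by (induction n) (simp_all add: birkhoff_sum_Suc_right algebra_simps)
  have below: "\<exists>N. \<forall>n\<ge>N. birkhoff_sum S f n z \<le> B" for B
    using assms(2) unfolding limsup_MInfty[symmetric] Lim_MInfty by simp
  show ?thesis
    unfolding filterlim_at_top eventually_sequentially w_iter
  proof
    fix Z
    show "\<exists>N. \<forall>n\<ge>N. Z \<le> w z - birkhoff_sum S f n z"
      using below[of "w z - Z"] by (auto simp: le_diff_eq add.commute)
  qed
qed

lemma limsup_birkhoff_sum_not_AE_MInfty:
  fixes f :: "_ \<Rightarrow> real"
  assumes P: "prob_space P" and S: "preserves P S"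
    and f: "integrable P f" and f_0: "(\<integral>z. f z \<partial>P) = 0"
  shows "\<not> (AE z in P. limsup (\<lambda>n. ereal (birkhoff_sum S f n z)) = -\<infinity>)"
proof
  assume MInfty: "AE z in P. limsup (\<lambda>n. ereal (birkhoff_sum S f n z)) = -\<infinity>"
  have [measurable]: "S \<in> P \<rightarrow>\<^sub>M P" using S by (rule preserves_measurable)
  have [measurable]: "f \<in> borel_measurable P" using f by simp
  have [measurable]: "birkhoff_sum S f n \<in> borel_measurable P" for n
    by (rule borel_measurable_birkhoff_sum) measurable
  define W where "W z = (SUP n. ereal (birkhoff_sum S f n z))" for z
  define w where "w z = real_of_ereal (W z)" for z
  have w_measurable [measurable]: "w \<in> borel_measurable P"
    unfolding w_def W_def by measurable
  have W_nonneg: "0 \<le> W z" for z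
    unfolding W_def by (rule SUP_upper2[of 0]) simp_all
  have "AE z in P. w (S z) - w z \<le> - f z"
    using MInfty
  proof eventually_elim
    case (elim z)
    have "ereal (f z) + W (S z) \<le> W z"
      unfolding W_def by (subst (2) SUP_birkhoff_sum_Suc) simp
    then obtain a b where "W (S z) = ereal a" "W z = ereal b" "f z + a \<le> b"
      using SUP_less_PInfty_if_limsup_MInfty[OF elim] W_nonneg[of z] W_nonneg[of "S z"]
      unfolding W_def[symmetric] by (cases "W z"; cases "W (S z)") auto
    then show ?case
      by (simp add: w_def)
  qed
  then have "AE z in P. w (S z) - w z = - f z"
    using P f f_0 by (intro AE_coboundary_eq[OF prob_space.finite_measure S]) simp_all
  then have "AE z in P. \<forall>k. w (S ((S ^^ k) z)) - w ((S ^^ k) z) = - f ((S ^^ k) z)"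
    unfolding AE_all_countable
    by (intro allI preserves_AE_comp[OF preserves_funpow[OF S]]) measurable
  then have "AE z in P. filterlim (\<lambda>n. w ((S ^^ n) z)) at_top sequentially"
    using MInfty by eventually_elim (rule filterlim_at_top_iterates_coboundary)
  with preserves_not_AE_tendsto_at_top[OF P S w_measurable] show False
    by blast
qed

section \<open>Characteristic functions\<close>

lemma borel_measurable_cis [measurable (raw)]:
  "f \<in> borel_measurable M \<Longrightarrow> (\<lambda>x. cis (f x)) \<in> borel_measurable M"
  unfolding cis_conv_exp by measurable

lemma norm_cis_integral_le_1:
  assumes "prob_space P"
  shows "cmod (CLINT y|P. cis (g y)) \<le> 1"
proof -
  interpret prob_space P by fact
  have "cmod (CLINT y|P. cis (g y)) \<le> (\<integral>y. cmod (cis (g y)) \<partial>P)"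
    by (rule integral_norm_bound)
  also have "\<dots> = 1"
    by (simp add: prob_space)
  finally show ?thesis .
qed

lemma cis_integral_nonzero_near_0:
  assumes "prob_space P" and g: "g \<in> borel_measurable P"
  shows "\<exists>\<delta>>0. \<forall>t. \<bar>t\<bar> < \<delta> \<longrightarrow> (CLINT y|P. cis (t * g y)) \<noteq> 0"
proof -
  interpret prob_space P by fact
  define D where "D = distr P borel g"
  interpret D: real_distribution D
    unfolding D_def using g by (rule real_distribution_distr)
  have char_D: "char D t = (CLINT y|P. cis (t * g y))" for t
    unfolding D_def char_def using g by (simp add: integral_distr cis_conv_exp)
  have "char D \<midarrow>0\<rightarrow> 1"
    using D.isCont_char[of 0] by (simp add: isCont_def D.char_zero)
  then obtain \<delta> where "\<delta> > 0" and \<delta>: "\<And>t. t \<noteq> 0 \<Longrightarrow> \<bar>t\<bar> < \<delta> \<Longrightarrow> cmod (char D t - 1) < 1"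
    unfolding LIM_eq by (metis real_norm_def diff_0_right zero_less_one)
  have "char D t \<noteq> 0" if "\<bar>t\<bar> < \<delta>" for t
    using \<delta>[of t] that D.char_zero by (cases "t = 0") auto
  with \<open>\<delta> > 0\<close> show ?thesis
    by (auto simp: char_D)
qed

lemma AE_cis_eq_if_norm_cis_integral_eq_1:
  assumes "prob_space P" and [measurable]: "g \<in> borel_measurable P"
    and norm_1: "cmod (CLINT y|P. cis (g y)) = 1"
  shows "AE y in P. cis (g y) = (CLINT y|P. cis (g y))"
proof -
  interpret prob_space P by fact
  define \<psi> where "\<psi> = (CLINT y|P. cis (g y))"
  have int: "integrable P (\<lambda>y. cis (g y))"
    by (rule integrable_const_bound[where B=1]) simp_all
  have \<psi>_cnj: "cnj \<psi> * \<psi> = 1"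
    using norm_1 complex_norm_square[of \<psi>] by (simp add: \<psi>_def mult.commute)
  define u where "u y = Re (cnj \<psi> * cis (g y))" for y
  have int_mult: "integrable P (\<lambda>y. cnj \<psi> * cis (g y))"
    using int by simp
  then have u_int: "integrable P u"
    unfolding u_def by (rule integrable_Re)
  have "(\<integral>y. u y \<partial>P) = Re (CLINT y|P. cnj \<psi> * cis (g y))"
    unfolding u_def using int_mult by (rule integral_Re)
  also have "\<dots> = Re (cnj \<psi> * \<psi>)"
    unfolding \<psi>_def by (subst integral_mult_right_zero) (rule refl)
  finally have "(\<integral>y. 1 - u y \<partial>P) = 0"
    using u_int \<psi>_cnj by (simp add: prob_space)
  moreover have "integrable P (\<lambda>y. 1 - u y)"
    using u_int by simp
  moreover have bound: "cmod (cnj \<psi> * cis (g y)) = 1" for y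
    using norm_1 by (simp add: norm_mult \<psi>_def)
  then have "AE y in P. 0 \<le> 1 - u y"
    unfolding u_def by (intro AE_I2) (metis complex_Re_le_cmod diff_ge_0_iff_ge)
  ultimately have "AE y in P. 1 - u y = 0"
    using integral_nonneg_eq_0_iff_AE by blast
  then show ?thesis
    unfolding \<psi>_def[symmetric]
  proof eventually_elim
    case (elim y)
    let ?w = "cnj \<psi> * cis (g y)"
    have "(Re ?w)\<^sup>2 + (Im ?w)\<^sup>2 = 1"
      using bound[of y] cmod_power2[of ?w] by simp
    with elim have "?w = 1"
      by (simp add: complex_eq_iff u_def)
    then have "\<psi> * ?w = \<psi>" by simp
    then show "cis (g y) = \<psi>"
      using \<psi>_cnj by (simp add: mult.assoc[symmetric] mult.commute[of \<psi>])
  qed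
qed

lemma exists_rat_cos_ne_1:
  fixes d \<delta> :: real
  assumes "d \<noteq> 0" and "\<delta> > 0"
  shows "\<exists>q::rat. 0 < real_of_rat q \<and> real_of_rat q < \<delta> \<and> cos (real_of_rat q * d) \<noteq> 1"
proof -
  have "0 < min \<delta> (pi / \<bar>d\<bar>)"
    using assms by simp
  then obtain r where "r \<in> \<rat>" "0 < r" "r < min \<delta> (pi / \<bar>d\<bar>)"
    using Rats_dense_in_real by blast
  moreover from this obtain q where "r = real_of_rat q"
    by (blast elim: Rats_cases)
  moreover have "cos (r * d) < 1" if "0 < r" "r * \<bar>d\<bar> < pi"
  proof -
    have "cos (r * \<bar>d\<bar>) < cos 0"
      using that assms by (intro cos_monotone_0_pi) auto
    then show ?thesis
      using that by (metis abs_mult abs_of_pos cos_abs_real cos_zero)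
  qed
  ultimately show ?thesis
    using assms by (intro exI[of _ q]) (auto simp: pos_less_divide_eq)
qed

lemma ex_AE_eq_const_uminus_iff:
  fixes g :: "_ \<Rightarrow> 'c::ab_group_add"
  shows "(\<exists>c. AE y in P. - g y = c) \<longleftrightarrow> (\<exists>c. AE y in P. g y = c)"
proof
  assume "\<exists>c. AE y in P. - g y = c"
  then obtain c where "AE y in P. - g y = c" ..
  then have "AE y in P. g y = - c"
    by eventually_elim auto
  then show "\<exists>c. AE y in P. g y = c" ..
next
  assume "\<exists>c. AE y in P. g y = c"
  then obtain c where "AE y in P. g y = c" ..
  then have "AE y in P. - g y = - c"
    by eventually_elim simp
  then show "\<exists>c. AE y in P. - g y = c" ..
qed

(* Only rational t are required, so that almost-sure statements over all of them can be combined. *)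
lemma AE_eq_const_if_norm_cis_integral_eq_1:
  fixes g :: "_ \<Rightarrow> real"
  assumes P: "prob_space P" and [measurable]: "g \<in> borel_measurable P" and "\<delta> > 0"
    and norm_1: "\<And>q::rat. 0 < real_of_rat q \<Longrightarrow> real_of_rat q < \<delta> \<Longrightarrow>
        cmod (CLINT y|P. cis (real_of_rat q * g y)) = 1"
  shows "\<exists>c. AE y in P. g y = c"
proof -
  interpret prob_space P by fact
  let ?small = "\<lambda>q. 0 < real_of_rat q \<and> real_of_rat q < \<delta>"
  let ?\<psi> = "\<lambda>q. CLINT y|P. cis (real_of_rat q * g y)"
  have AE_cis: "AE y in P. \<forall>q. ?small q \<longrightarrow> cis (real_of_rat q * g y) = ?\<psi> q"
    unfolding AE_all_countable
    using AE_cis_eq_if_norm_cis_integral_eq_1[OF P _ norm_1] by simp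
  moreover have "\<exists>y0. \<forall>q. ?small q \<longrightarrow> cis (real_of_rat q * g y0) = ?\<psi> q"
    using eventually_happens'[OF _ AE_cis] by (simp add: ae_filter_eq_bot_iff emeasure_space_1)
  then obtain y0 where y0: "\<forall>q. ?small q \<longrightarrow> cis (real_of_rat q * g y0) = ?\<psi> q"
    by blast
  have "AE y in P. g y = g y0"
    using AE_cis
  proof eventually_elim
    case (elim y)
    have "cos (real_of_rat q * (g y - g y0)) = 1" if "?small q" for q
    proof -
      have "cis (real_of_rat q * g y) = cis (real_of_rat q * g y0)"
        using elim y0 that by simp
      then have "cis (real_of_rat q * (g y - g y0)) = 1"
        by (simp add: right_diff_distrib flip: cis_divide)
      then show ?thesis
        using cis.sel(1) by (metis one_complex.sel(1))
    qed
    then show "g y = g y0"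
      using exists_rat_cos_ne_1[of "g y - g y0" \<delta>] \<open>\<delta> > 0\<close> by fastforce
  qed
  then show ?thesis by blast
qed

section \<open>Fibre measures and the shift\<close>

lemma measurable_case_nat_PiM:
  "(\<lambda>(s, \<omega>). case_nat s \<omega>) \<in> Mf 0 \<Otimes>\<^sub>M PiM UNIV (\<lambda>n. Mf (Suc n)) \<rightarrow>\<^sub>M PiM UNIV Mf"
proof -
  have "(\<lambda>z. case_nat (fst z) (snd z)) \<in> Mf 0 \<Otimes>\<^sub>M PiM UNIV (\<lambda>n. Mf (Suc n)) \<rightarrow>\<^sub>M PiM UNIV Mf"
  proof (rule measurable_PiM_single')
    show "(\<lambda>z. case_nat (fst z) (snd z) i) \<in> Mf 0 \<Otimes>\<^sub>M PiM UNIV (\<lambda>n. Mf (Suc n)) \<rightarrow>\<^sub>M Mf i" for i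
      by (cases i) simp_all
  qed (auto simp: space_pair_measure space_PiM PiE_iff split: nat.split)
  then show ?thesis
    by (simp add: case_prod_beta')
qed

lemma distr_PiM_case_nat:
  assumes prob: "\<And>i. prob_space (Mf i)"
  shows "distr (Mf 0 \<Otimes>\<^sub>M PiM UNIV (\<lambda>n. Mf (Suc n))) (PiM UNIV Mf) (\<lambda>(s, \<omega>). case_nat s \<omega>)
    = PiM UNIV Mf"
    (is "?D = _")
proof -
  interpret Pi: product_prob_space Mf UNIV
    by (rule product_prob_spaceI) (rule prob)
  interpret tail: prob_space "PiM UNIV (\<lambda>n. Mf (Suc n))"
    by (intro prob_space_PiM prob)
  interpret pair: pair_prob_space "Mf 0" "PiM UNIV (\<lambda>n. Mf (Suc n))"
    by (simp add: pair_prob_space_def pair_sigma_finite_def prob tail.prob_space_axioms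
        prob_space_imp_sigma_finite)
  show ?thesis
  proof (rule Pi.PiM_eq)
    fix J :: "nat set" and E
    assume J: "finite J" "J \<subseteq> UNIV" "\<And>j. j \<in> J \<Longrightarrow> E j \<in> sets (Mf j)"
    let ?X = "prod_emb UNIV Mf J (\<Pi>\<^sub>E j\<in>J. E j)"
    let ?E = "if 0 \<in> J then E 0 else space (Mf 0)"
    let ?F = "prod_emb UNIV (\<lambda>n. Mf (Suc n)) (Suc -` J) (\<Pi>\<^sub>E j\<in>Suc -` J. E (Suc j))"
    have "\<And>j x. j \<in> J \<Longrightarrow> x \<in> E j \<Longrightarrow> x \<in> space (Mf j)"
      using J(3)[THEN sets.sets_into_space] by auto
    then have "(\<lambda>(s, \<omega>). case_nat s \<omega>) -` ?X \<inter> space (Mf 0 \<Otimes>\<^sub>M PiM UNIV (\<lambda>n. Mf (Suc n)))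
        = ?E \<times> ?F"
      by (auto simp: space_pair_measure space_PiM PiE_iff prod_emb_def all_conj_distrib
          split: nat.split nat.split_asm)
    then have "emeasure ?D ?X = emeasure (Mf 0 \<Otimes>\<^sub>M PiM UNIV (\<lambda>n. Mf (Suc n))) (?E \<times> ?F)"
      by (subst emeasure_distr[OF measurable_case_nat_PiM]) (auto intro!: sets_PiM_I simp: J)
    also have "\<dots> = emeasure (Mf 0) ?E * emeasure (PiM UNIV (\<lambda>n. Mf (Suc n))) ?F"
      using J by (intro tail.emeasure_pair_measure_Times) (auto intro!: sets_PiM_I finite_vimageI)
    also have "emeasure (PiM UNIV (\<lambda>n. Mf (Suc n))) ?F
        = (\<Prod>j\<in>Suc -` J. emeasure (Mf (Suc j)) (E (Suc j)))"
      using J by (intro emeasure_PiM_emb prob) (simp_all add: finite_vimageI)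
    also have "\<dots> = (\<Prod>j\<in>J - {0}. emeasure (Mf j) (E j))"
      by (rule prod.reindex_cong[of "\<lambda>j. j - 1"]) (auto simp: image_iff inj_on_def, force)
    also have "emeasure (Mf 0) ?E * (\<Prod>j\<in>J - {0}. emeasure (Mf j) (E j))
        = (\<Prod>j\<in>J. emeasure (Mf j) (E j))"
      by (auto simp: prob_space.emeasure_space_1[OF prob] prod.remove J)
    finally show "emeasure ?D ?X = (\<Prod>j\<in>J. emeasure (Mf j) (E j))" .
  qed simp
qed

lemma measurable_fibre_measure_0:
  "(\<lambda>\<omega>. \<omega> 0) \<in> fibre_measure T K x \<rightarrow>\<^sub>M K x"
  unfolding fibre_measure_def
  using measurable_component_singleton[of 0 UNIV "\<lambda>k. K ((T ^^ k) x)"] by simp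

lemma fibre_measure_Suc: "fibre_measure T K (T x) = PiM UNIV (\<lambda>n. K ((T ^^ Suc n) x))"
  unfolding fibre_measure_def by (simp add: funpow_swap1)

lemma measurable_fibre_measure_case_nat:
  "(\<lambda>(s, \<omega>). case_nat s \<omega>) \<in> K x \<Otimes>\<^sub>M fibre_measure T K (T x) \<rightarrow>\<^sub>M fibre_measure T K x"
  using measurable_case_nat_PiM[of "\<lambda>k. K ((T ^^ k) x)"]
  unfolding fibre_measure_Suc unfolding fibre_measure_def by (simp only: funpow_0)

lemma prob_space_kernel:
  assumes "K \<in> M \<rightarrow>\<^sub>M prob_algebra N" and "x \<in> space M"
  shows "prob_space (K x)"
  using measurable_space[OF assms] by (simp add: space_prob_algebra)

lemma space_kernel: "K \<in> M \<rightarrow>\<^sub>M prob_algebra N \<Longrightarrow> x \<in> space M \<Longrightarrow> space (K x) = space N"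
  by (intro sets_eq_imp_space_eq sets_kernel measurable_prob_algebraD)

lemma funpow_in_space: "T \<in> M \<rightarrow>\<^sub>M M \<Longrightarrow> x \<in> space M \<Longrightarrow> (T ^^ k) x \<in> space M"
  by (rule measurable_space[OF measurable_compose_n])

context
  fixes M :: "'a measure" and N :: "'b measure" and T :: "'a \<Rightarrow> 'a" and K :: "'a \<Rightarrow> 'b measure"
  assumes T: "T \<in> M \<rightarrow>\<^sub>M M" and K: "K \<in> M \<rightarrow>\<^sub>M prob_algebra N"
begin

lemma prob_space_fibre_measure: "x \<in> space M \<Longrightarrow> prob_space (fibre_measure T K x)"
  unfolding fibre_measure_def
  by (intro prob_space_PiM prob_space_kernel[OF K] funpow_in_space[OF T])

lemma sets_fibre_measure:
  "x \<in> space M \<Longrightarrow> sets (fibre_measure T K x) = sets (PiM UNIV (\<lambda>_::nat. N))"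
  unfolding fibre_measure_def
  by (intro sets_PiM_cong refl sets_kernel[OF measurable_prob_algebraD[OF K]] funpow_in_space[OF T])

lemma measurable_fibre_measure:
  "fibre_measure T K \<in> M \<rightarrow>\<^sub>M prob_algebra (PiM UNIV (\<lambda>_::nat. N))"
proof (rule measurable_prob_algebra_generated[OF sets_PiM Int_stable_prod_algebra
      prod_algebra_sets_into_space])
  fix A assume "A \<in> prod_algebra UNIV (\<lambda>_::nat. N)"
  then obtain J E where A: "A = prod_emb UNIV (\<lambda>_. N) J (PiE J E)"
    and "finite J" and E: "\<And>j. j \<in> J \<Longrightarrow> E j \<in> sets N"
    by (elim prod_algebraE) auto
  have emeasure_A: "emeasure (fibre_measure T K x) A = (\<Prod>j\<in>J. emeasure (K ((T ^^ j) x)) (E j))"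
    if "x \<in> space M" for x
  proof -
    have "A = prod_emb UNIV (\<lambda>k. K ((T ^^ k) x)) J (PiE J E)"
      unfolding A prod_emb_def by (simp add: space_kernel[OF K] funpow_in_space[OF T] that)
    then show ?thesis
      unfolding fibre_measure_def using \<open>finite J\<close> E that
      by (simp add: emeasure_PiM_emb prob_space_kernel[OF K]
          sets_kernel[OF measurable_prob_algebraD[OF K]] funpow_in_space[OF T])
  qed
  have "(\<lambda>x. emeasure (K ((T ^^ j) x)) (E j)) \<in> borel_measurable M" if "j \<in> J" for j
    using measurable_compose[OF measurable_compose_n[OF T]
        measurable_emeasure_kernel[OF measurable_prob_algebraD[OF K] E[OF that]]] .
  then have "(\<lambda>x. \<Prod>j\<in>J. emeasure (K ((T ^^ j) x)) (E j)) \<in> borel_measurable M"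
    by (rule borel_measurable_prod_ennreal)
  then show "(\<lambda>x. emeasure (fibre_measure T K x) A) \<in> borel_measurable M"
    by (rule measurable_cong[THEN iffD2, rotated]) (simp add: emeasure_A)
qed (auto simp: prob_space_fibre_measure sets_fibre_measure)

lemma distr_fibre_measure_0:
  assumes "x \<in> space M"
  shows "distr (fibre_measure T K x) (K x) (\<lambda>\<omega>. \<omega> 0) = K x"
  using distr_PiM_component[of UNIV "\<lambda>k. K ((T ^^ k) x)" 0] assms
  by (simp add: fibre_measure_def prob_space_kernel[OF K] funpow_in_space[OF T])

lemma distr_fibre_measure_case_nat:
  assumes "x \<in> space M"
  shows "distr (K x \<Otimes>\<^sub>M fibre_measure T K (T x)) (fibre_measure T K x) (\<lambda>(s, \<omega>). case_nat s \<omega>)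
    = fibre_measure T K x"
proof -
  have "prob_space (K ((T ^^ k) x))" for k
    using assms by (simp add: prob_space_kernel[OF K] funpow_in_space[OF T])
  from distr_PiM_case_nat[of "\<lambda>k. K ((T ^^ k) x)", OF this] show ?thesis
    unfolding fibre_measure_Suc unfolding fibre_measure_def by (simp only: funpow_0)
qed

end

lemma funpow_shift_hat: "(shift_hat T ^^ k) (x, \<omega>) = ((T ^^ k) x, \<lambda>j. \<omega> (j + k))"
  by (induction k) (simp_all add: shift_hat_def)

lemma birkhoff_sum_shift_hat:
  "birkhoff_sum (shift_hat T) (\<lambda>z. h (fst z, snd z 0)) n (x, \<omega>)
    = (\<Sum>k<n. h ((T ^^ k) x, \<omega> k))"
  by (simp add: birkhoff_sum_def funpow_shift_hat)

lemma measurable_shift_hat [measurable]: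
  assumes [measurable]: "T \<in> M \<rightarrow>\<^sub>M M"
  shows "shift_hat T \<in> M \<Otimes>\<^sub>M PiM UNIV (\<lambda>_::nat. N) \<rightarrow>\<^sub>M M \<Otimes>\<^sub>M PiM UNIV (\<lambda>_. N)"
proof -
  have [measurable]: "(\<lambda>\<omega> k. \<omega> (Suc k)) \<in> PiM UNIV (\<lambda>_::nat. N) \<rightarrow>\<^sub>M PiM UNIV (\<lambda>_. N)"
    by (rule measurable_PiM_single') (auto simp: space_PiM)
  show ?thesis
    unfolding shift_hat_def by measurable
qed

section \<open>The skew product\<close>

lemma integral_measurable_subprob_algebra2:
  fixes f :: "_ \<Rightarrow> _ \<Rightarrow> _::{banach, second_countable_topology}"
  assumes [measurable]: "(\<lambda>(x, y). f x y) \<in> borel_measurable (M \<Otimes>\<^sub>M N)"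
    and L [measurable]: "L \<in> M \<rightarrow>\<^sub>M subprob_algebra N"
  shows "(\<lambda>x. integral\<^sup>L (L x) (f x)) \<in> borel_measurable M"
proof -
  note integral_measurable_subprob_algebra[measurable] measurable_distr2[measurable]
  have "(\<lambda>x. integral\<^sup>L (distr (L x) (M \<Otimes>\<^sub>M N) (\<lambda>y. (x, y))) (\<lambda>(x, y). f x y)) \<in> borel_measurable M"
    by measurable
  then show ?thesis
    by (rule measurable_cong[THEN iffD1, rotated])
      (auto simp: integral_distr space_subprob_algebra dest: measurable_space[OF L])
qed

locale skew_product =
  fixes M :: "'a measure" and N :: "'b measure" and T :: "'a \<Rightarrow> 'a" and K :: "'a \<Rightarrow> 'b measure"
  assumes prob_space_M: "prob_space M"
    and preserves_T: "preserves M T"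
    and K_kernel: "K \<in> M \<rightarrow>\<^sub>M prob_algebra N"
begin

abbreviation "\<Omega> \<equiv> PiM UNIV (\<lambda>_::nat. N)"
abbreviation "Q \<equiv> skew_measure M N T K"
abbreviation "skew_sum h \<equiv> birkhoff_sum (shift_hat T) (\<lambda>z. h (fst z, snd z 0))"

lemma T_measurable [measurable]: "T \<in> M \<rightarrow>\<^sub>M M"
  using preserves_T by (rule preserves_measurable)

lemma K_subprob [measurable]: "K \<in> M \<rightarrow>\<^sub>M subprob_algebra N"
  using K_kernel by (rule measurable_prob_algebraD)

lemma fibre_measure_subprob [measurable]: "fibre_measure T K \<in> M \<rightarrow>\<^sub>M subprob_algebra \<Omega>"
  using measurable_fibre_measure[OF T_measurable K_kernel] by (rule measurable_prob_algebraD)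

lemma measurable_fibre_section:
  "x \<in> space M \<Longrightarrow> G \<in> borel_measurable (M \<Otimes>\<^sub>M \<Omega>) \<Longrightarrow>
    (\<lambda>\<omega>. G (x, \<omega>)) \<in> borel_measurable (fibre_measure T K x)"
  using measurable_Pair2
  by (simp cong: measurable_cong_sets add: sets_fibre_measure[OF T_measurable K_kernel])

lemma measurable_kernel_section:
  "x \<in> space M \<Longrightarrow> h \<in> borel_measurable (M \<Otimes>\<^sub>M N) \<Longrightarrow> (\<lambda>y. h (x, y)) \<in> borel_measurable (K x)"
  using measurable_Pair2 by (simp cong: measurable_cong_sets add: sets_kernel[OF K_subprob])

lemma measurable_Pair_fibre: "x \<in> space M \<Longrightarrow> Pair x \<in> fibre_measure T K x \<rightarrow>\<^sub>M M \<Otimes>\<^sub>M \<Omega>"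
  by (simp cong: measurable_cong_sets add: sets_fibre_measure[OF T_measurable K_kernel])

lemma measurable_distr_fibre_measure_Pair:
  "(\<lambda>x. distr (fibre_measure T K x) (M \<Otimes>\<^sub>M \<Omega>) (Pair x))
    \<in> M \<rightarrow>\<^sub>M subprob_algebra (M \<Otimes>\<^sub>M \<Omega>)"
  by (rule measurable_distr2[OF _ fibre_measure_subprob]) simp

lemma sets_Q [measurable_cong]: "sets Q = sets (M \<Otimes>\<^sub>M \<Omega>)"
  unfolding skew_measure_def
  by (rule sets_bind[OF _ prob_space.not_empty[OF prob_space_M]]) simp

sublocale Q: prob_space Q
  unfolding skew_measure_def
proof (rule prob_space.prob_space_bind[OF prob_space_M _ measurable_distr_fibre_measure_Pair])
  show "AE x in M. prob_space (distr (fibre_measure T K x) (M \<Otimes>\<^sub>M \<Omega>) (Pair x))"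
    by (intro AE_I2 prob_space.prob_space_distr prob_space_fibre_measure[OF T_measurable K_kernel]
        measurable_Pair_fibre)
qed

lemma AE_Q:
  assumes [measurable]: "Measurable.pred (M \<Otimes>\<^sub>M \<Omega>) P"
  shows "(AE z in Q. P z) \<longleftrightarrow> (AE x in M. AE \<omega> in fibre_measure T K x. P (x, \<omega>))"
  unfolding skew_measure_def AE_bind[OF measurable_distr_fibre_measure_Pair assms]
  by (intro AE_cong AE_distr_iff measurable_Pair_fibre) simp_all

lemma nn_integral_Q:
  assumes [measurable]: "H \<in> borel_measurable (M \<Otimes>\<^sub>M \<Omega>)"
  shows "(\<integral>\<^sup>+z. H z \<partial>Q) = (\<integral>\<^sup>+x. \<integral>\<^sup>+\<omega>. H (x, \<omega>) \<partial>fibre_measure T K x \<partial>M)"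
  unfolding skew_measure_def nn_integral_bind[OF assms measurable_distr_fibre_measure_Pair]
  by (intro nn_integral_cong) (simp add: nn_integral_distr measurable_Pair_fibre)

lemma distr_Q_zeroth_coordinate:
  assumes sets_\<Theta>: "sets \<Theta> = sets (M \<Otimes>\<^sub>M N)"
    and disint: "\<And>H :: 'a \<times> 'b \<Rightarrow> ennreal. H \<in> borel_measurable (M \<Otimes>\<^sub>M N) \<Longrightarrow>
        (\<integral>\<^sup>+ z. H z \<partial>\<Theta>) = (\<integral>\<^sup>+ x. (\<integral>\<^sup>+ y. H (x, y) \<partial>K x) \<partial>M)"
  shows "distr Q (M \<Otimes>\<^sub>M N) (\<lambda>z. (fst z, snd z 0)) = \<Theta>"
proof (rule measure_eqI)
  show "sets (distr Q (M \<Otimes>\<^sub>M N) (\<lambda>z. (fst z, snd z 0))) = sets \<Theta>"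
    using sets_\<Theta> by simp
next
  fix A assume "A \<in> sets (distr Q (M \<Otimes>\<^sub>M N) (\<lambda>z. (fst z, snd z 0)))"
  then have [measurable]: "A \<in> sets (M \<Otimes>\<^sub>M N)" by simp
  have "emeasure (distr Q (M \<Otimes>\<^sub>M N) (\<lambda>z. (fst z, snd z 0))) A
      = (\<integral>\<^sup>+z. indicator A z \<partial>distr Q (M \<Otimes>\<^sub>M N) (\<lambda>z. (fst z, snd z 0)))"
    by (rule nn_integral_indicator[symmetric]) simp
  also have "\<dots> = (\<integral>\<^sup>+z. indicator A (fst z, snd z 0) \<partial>Q)"
    by (rule nn_integral_distr) measurable
  also have "\<dots> = (\<integral>\<^sup>+x. \<integral>\<^sup>+\<omega>. indicator A (x, \<omega> 0) \<partial>fibre_measure T K x \<partial>M)"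
    using nn_integral_Q[of "\<lambda>z. indicator A (fst z, snd z 0)"] by simp
  also have "\<dots> = (\<integral>\<^sup>+x. \<integral>\<^sup>+y. indicator A (x, y) \<partial>K x \<partial>M)"
  proof (intro nn_integral_cong)
    fix x assume x: "x \<in> space M"
    have "(\<lambda>y. indicator A (x, y) :: ennreal) \<in> borel_measurable (K x)"
      by (rule measurable_kernel_section[OF x]) measurable
    then have "(\<integral>\<^sup>+y. indicator A (x, y) \<partial>distr (fibre_measure T K x) (K x) (\<lambda>\<omega>. \<omega> 0))
        = (\<integral>\<^sup>+\<omega>. indicator A (x, \<omega> 0) \<partial>fibre_measure T K x)"
      by (intro nn_integral_distr measurable_fibre_measure_0) simp
    then show "(\<integral>\<^sup>+\<omega>. indicator A (x, \<omega> 0) \<partial>fibre_measure T K x) = (\<integral>\<^sup>+y. indicator A (x, y) \<partial>K x)"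
      by (simp add: distr_fibre_measure_0[OF T_measurable K_kernel x])
  qed
  also have "\<dots> = emeasure \<Theta> A"
    using disint[of "indicator A"] sets_\<Theta> by simp
  finally show "emeasure (distr Q (M \<Otimes>\<^sub>M N) (\<lambda>z. (fst z, snd z 0))) A = emeasure \<Theta> A" .
qed

lemma integral_fibre_measure_case_nat:
  fixes F :: "_ \<Rightarrow> 'c::{banach, second_countable_topology}"
  assumes x: "x \<in> space M" and F: "F \<in> borel_measurable (fibre_measure T K x)"
  shows "(\<integral>\<omega>. F \<omega> \<partial>fibre_measure T K x)
    = (\<integral>z. F (case_nat (fst z) (snd z)) \<partial>(K x \<Otimes>\<^sub>M fibre_measure T K (T x)))"
proof -
  have "(\<integral>\<omega>. F \<omega> \<partial>fibre_measure T K x)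
      = (\<integral>\<omega>. F \<omega> \<partial>distr (K x \<Otimes>\<^sub>M fibre_measure T K (T x)) (fibre_measure T K x)
          (\<lambda>(s, \<omega>). case_nat s \<omega>))"
    by (simp add: distr_fibre_measure_case_nat[OF T_measurable K_kernel x])
  also have "\<dots> = (\<integral>z. F (case_nat (fst z) (snd z)) \<partial>(K x \<Otimes>\<^sub>M fibre_measure T K (T x)))"
    by (subst integral_distr[OF measurable_fibre_measure_case_nat F]) (simp add: case_prod_beta')
  finally show ?thesis .
qed

lemma cis_integral_fibre_split:
  fixes h :: "'a \<times> 'b \<Rightarrow> real" and G :: "'a \<times> (nat \<Rightarrow> 'b) \<Rightarrow> real"
  assumes x: "x \<in> space M"
    and [measurable]: "h \<in> borel_measurable (M \<Otimes>\<^sub>M N)" "G \<in> borel_measurable (M \<Otimes>\<^sub>M \<Omega>)"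
    and cocycle: "AE \<omega> in fibre_measure T K x. G (x, \<omega>) = h (x, \<omega> 0) + G (shift_hat T (x, \<omega>))"
  shows "(CLINT \<omega>|fibre_measure T K x. cis (t * G (x, \<omega>)))
    = (CLINT y|K x. cis (t * h (x, y))) * (CLINT \<omega>|fibre_measure T K (T x). cis (t * G (T x, \<omega>)))"
proof -
  have Tx: "T x \<in> space M"
    using x by (rule measurable_space[OF T_measurable])
  interpret Kx: prob_space "K x"
    using x by (rule prob_space_kernel[OF K_kernel])
  interpret QTx: prob_space "fibre_measure T K (T x)"
    using Tx by (rule prob_space_fibre_measure[OF T_measurable K_kernel])
  interpret pair: pair_prob_space "K x" "fibre_measure T K (T x)" ..
  define F where "F \<omega> = cis (t * h (x, \<omega> 0)) * cis (t * G (shift_hat T (x, \<omega>)))" for \<omega>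
  have "(\<lambda>z. cis (t * h (fst z, snd z 0)) * cis (t * G (shift_hat T z)))
      \<in> borel_measurable (M \<Otimes>\<^sub>M \<Omega>)"
    by measurable
  from measurable_fibre_section[OF x this]
  have F_measurable: "F \<in> borel_measurable (fibre_measure T K x)"
    by (simp add: F_def[abs_def])
  have "(CLINT \<omega>|fibre_measure T K x. cis (t * G (x, \<omega>))) = (CLINT \<omega>|fibre_measure T K x. F \<omega>)"
  proof (rule integral_cong_AE)
    have "(\<lambda>z. cis (t * G z)) \<in> borel_measurable (M \<Otimes>\<^sub>M \<Omega>)"
      by measurable
    from measurable_fibre_section[OF x this]
    show "(\<lambda>\<omega>. cis (t * G (x, \<omega>))) \<in> borel_measurable (fibre_measure T K x)" .
    show "AE \<omega> in fibre_measure T K x. cis (t * G (x, \<omega>)) = F \<omega>"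
      using cocycle by eventually_elim (simp add: F_def cis_mult distrib_left)
  qed (rule F_measurable)
  also have "\<dots> = (CLINT z|K x \<Otimes>\<^sub>M fibre_measure T K (T x). F (case_nat (fst z) (snd z)))"
    using x F_measurable by (rule integral_fibre_measure_case_nat)
  also have "\<dots> = (CLINT z|K x \<Otimes>\<^sub>M fibre_measure T K (T x).
      cis (t * h (x, fst z)) * cis (t * G (T x, snd z)))"
    by (simp add: F_def shift_hat_def)
  also have "\<dots> = (CLINT y|K x. CLINT \<omega>|fibre_measure T K (T x).
      cis (t * h (x, y)) * cis (t * G (T x, \<omega>)))"
  proof -
    have "(\<lambda>z. cis (t * h (x, fst z)) * cis (t * G (T x, snd z))) \<in> borel_measurable (N \<Otimes>\<^sub>M \<Omega>)"
      using x Tx by measurable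
    then have "integrable (K x \<Otimes>\<^sub>M fibre_measure T K (T x))
        (\<lambda>z. cis (t * h (x, fst z)) * cis (t * G (T x, snd z)))"
      by (intro pair.P.integrable_const_bound[where B=1])
        (simp_all add: norm_mult sets_kernel[OF K_subprob x]
          sets_fibre_measure[OF T_measurable K_kernel Tx] cong: measurable_cong_sets)
    from pair.integral_fst'[OF this] show ?thesis
      by simp
  qed
  also have "\<dots> = (CLINT y|K x. cis (t * h (x, y)))
      * (CLINT \<omega>|fibre_measure T K (T x). cis (t * G (T x, \<omega>)))"
    by simp
  finally show ?thesis .
qed

lemma AE_norm_cis_integral_fibre_invariant:
  fixes h :: "'a \<times> 'b \<Rightarrow> real" and G :: "'a \<times> (nat \<Rightarrow> 'b) \<Rightarrow> real"
  assumes [measurable]: "h \<in> borel_measurable (M \<Otimes>\<^sub>M N)" "G \<in> borel_measurable (M \<Otimes>\<^sub>M \<Omega>)"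
    and cocycle: "AE x in M. AE \<omega> in fibre_measure T K x.
      G (x, \<omega>) = h (x, \<omega> 0) + G (shift_hat T (x, \<omega>))"
  shows "AE x in M. cmod (CLINT \<omega>|fibre_measure T K (T x). cis (t * G (T x, \<omega>)))
    = cmod (CLINT \<omega>|fibre_measure T K x. cis (t * G (x, \<omega>)))"
proof -
  define \<phi> where "\<phi> x = cmod (CLINT \<omega>|fibre_measure T K x. cis (t * G (x, \<omega>)))" for x
  have "(\<lambda>(x, \<omega>). cis (t * G (x, \<omega>))) \<in> borel_measurable (M \<Otimes>\<^sub>M \<Omega>)"
    unfolding case_prod_beta' by measurable
  then have "(\<lambda>x. CLINT \<omega>|fibre_measure T K x. cis (t * G (x, \<omega>))) \<in> borel_measurable M"
    by (rule integral_measurable_subprob_algebra2[OF _ fibre_measure_subprob])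
  then have \<phi>_measurable: "(\<lambda>x. - \<phi> x) \<in> borel_measurable M"
    unfolding \<phi>_def
    by (intro borel_measurable_uminus measurable_compose[OF _ borel_measurable_norm])
  have "AE x in M. - \<phi> (T x) - - \<phi> x \<le> 0"
    using AE_space cocycle
  proof eventually_elim
    case (elim x)
    have "\<phi> x = cmod (CLINT y|K x. cis (t * h (x, y))) * \<phi> (T x)"
      unfolding \<phi>_def cis_integral_fibre_split[OF elim(1) assms(1,2) elim(2)]
      by (simp add: norm_mult)
    also have "\<dots> \<le> \<phi> (T x)"
      using norm_cis_integral_le_1[OF prob_space_kernel[OF K_kernel elim(1)]]
      by (intro mult_left_le_one_le) (simp_all add: \<phi>_def)
    finally show ?case
      by simp
  qed
  then have "AE x in M. - \<phi> (T x) - - \<phi> x = 0"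
    using prob_space.finite_measure[OF prob_space_M] preserves_T \<phi>_measurable
    by (intro AE_coboundary_eq) simp_all
  then show ?thesis
    by eventually_elim (simp add: \<phi>_def)
qed

lemma AE_kernel_const_if_cocycle:
  fixes h :: "'a \<times> 'b \<Rightarrow> real" and G :: "'a \<times> (nat \<Rightarrow> 'b) \<Rightarrow> real"
  assumes h [measurable]: "h \<in> borel_measurable (M \<Otimes>\<^sub>M N)"
    and G [measurable]: "G \<in> borel_measurable (M \<Otimes>\<^sub>M \<Omega>)"
    and cocycle: "AE x in M. AE \<omega> in fibre_measure T K x.
      G (x, \<omega>) = h (x, \<omega> 0) + G (shift_hat T (x, \<omega>))"
  shows "AE x in M. \<exists>c. AE y in K x. h (x, y) = c"
proof -
  let ?\<phi> = "\<lambda>t x. CLINT \<omega>|fibre_measure T K x. cis (t * G (x, \<omega>))"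
  let ?\<psi> = "\<lambda>t x. CLINT y|K x. cis (t * h (x, y))"
  have "AE x in M. \<forall>q::rat. cmod (?\<phi> (real_of_rat q) (T x)) = cmod (?\<phi> (real_of_rat q) x)"
    unfolding AE_all_countable by (intro allI AE_norm_cis_integral_fibre_invariant[OF h G cocycle])
  with AE_space cocycle show ?thesis
  proof eventually_elim
    case (elim x)
    obtain \<delta> where "\<delta> > 0" and nonzero: "\<And>t. \<bar>t\<bar> < \<delta> \<Longrightarrow> ?\<phi> t x \<noteq> 0"
      using cis_integral_nonzero_near_0[OF
          prob_space_fibre_measure[OF T_measurable K_kernel elim(1)]
          measurable_fibre_section[OF elim(1) G]]
      by blast
    have "cmod (?\<psi> (real_of_rat q) x) = 1" if "0 < real_of_rat q" "real_of_rat q < \<delta>" for q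
    proof -
      let ?t = "real_of_rat q"
      have "cmod (?\<phi> ?t x) = cmod (?\<psi> ?t x) * cmod (?\<phi> ?t (T x))"
        unfolding cis_integral_fibre_split[OF elim(1) h G elim(2), of ?t] by (simp add: norm_mult)
      also have "cmod (?\<phi> ?t (T x)) = cmod (?\<phi> ?t x)"
        using elim(3) by simp
      finally have "cmod (?\<phi> ?t x) = cmod (?\<psi> ?t x) * cmod (?\<phi> ?t x)" .
      moreover have "?\<phi> ?t x \<noteq> 0"
        using nonzero that by simp
      ultimately show ?thesis
        by simp
    qed
    then show "\<exists>c. AE y in K x. h (x, y) = c"
      by (intro AE_eq_const_if_norm_cis_integral_eq_1[OF prob_space_kernel[OF K_kernel elim(1)]
          measurable_kernel_section[OF elim(1) h] \<open>\<delta> > 0\<close>])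
  qed
qed

lemma borel_measurable_limsup_birkhoff_sum:
  assumes [measurable]: "h \<in> borel_measurable (M \<Otimes>\<^sub>M N)"
  shows "(\<lambda>z. limsup (\<lambda>n. ereal (skew_sum h n z))) \<in> borel_measurable (M \<Otimes>\<^sub>M \<Omega>)"
proof -
  have [measurable]: "skew_sum h n \<in> borel_measurable (M \<Otimes>\<^sub>M \<Omega>)" for n
    by (rule borel_measurable_birkhoff_sum) measurable
  show ?thesis
    by measurable
qed

lemma limsup_birkhoff_sum_not_AE_finite:
  fixes h :: "'a \<times> 'b \<Rightarrow> real"
  assumes h [measurable]: "h \<in> borel_measurable (M \<Otimes>\<^sub>M N)"
    and nonconst: "AE x in M. \<not> (\<exists>c. AE y in K x. h (x, y) = c)"
  shows "\<not> (AE z in Q. \<bar>limsup (\<lambda>n. ereal (skew_sum h n z))\<bar> \<noteq> \<infinity>)"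
    (is "\<not> (AE z in Q. \<bar>?L z\<bar> \<noteq> \<infinity>)")
proof
  assume finite: "AE z in Q. \<bar>?L z\<bar> \<noteq> \<infinity>"
  define G where "G z = real_of_ereal (?L z)" for z
  have [measurable]: "?L \<in> borel_measurable (M \<Otimes>\<^sub>M \<Omega>)"
    using h by (rule borel_measurable_limsup_birkhoff_sum)
  have G_measurable [measurable]: "G \<in> borel_measurable (M \<Otimes>\<^sub>M \<Omega>)"
    unfolding G_def by measurable
  have "AE z in Q. G z = h (fst z, snd z 0) + G (shift_hat T z)"
    using finite
  proof eventually_elim
    case (elim z)
    have "?L z = ereal (h (fst z, snd z 0)) + ?L (shift_hat T z)"
      by (rule limsup_birkhoff_sum)
    with elim show ?case
      unfolding G_def by (cases "?L (shift_hat T z)") auto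
  qed
  then have "AE x in M. AE \<omega> in fibre_measure T K x.
      G (x, \<omega>) = h (x, \<omega> 0) + G (shift_hat T (x, \<omega>))"
    by (subst (asm) AE_Q) simp_all
  from AE_kernel_const_if_cocycle[OF h G_measurable this] nonconst
  have "AE x in M. False"
    by eventually_elim blast
  then show False
    by (simp add: prob_space.AE_const[OF prob_space_M])
qed

lemma limsup_birkhoff_sum_eq_PInfty:
  fixes h :: "'a \<times> 'b \<Rightarrow> real"
  assumes ergodic: "ergodic Q (shift_hat T)"
    and h [measurable]: "h \<in> borel_measurable (M \<Otimes>\<^sub>M N)"
    and nonconst: "AE x in M. \<not> (\<exists>c. AE y in K x. h (x, y) = c)"
    and integrable: "integrable Q (\<lambda>z. h (fst z, snd z 0))"
    and mean_0: "(\<integral>z. h (fst z, snd z 0) \<partial>Q) = 0"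
  shows "AE z in Q. limsup (\<lambda>n. ereal (skew_sum h n z)) = \<infinity>"
proof -
  have "preserves Q (shift_hat T)"
    using ergodic by (simp add: ergodic_def)
  then show ?thesis
    using ergodic_limsup_birkhoff_sum_cases[OF Q.prob_space_axioms ergodic,
        of "\<lambda>z. h (fst z, snd z 0)"]
      limsup_birkhoff_sum_not_AE_MInfty[OF Q.prob_space_axioms _ integrable mean_0]
      limsup_birkhoff_sum_not_AE_finite[OF h nonconst]
    by auto
qed

lemma AE_fibre_limsup_sum_eq_PInfty:
  fixes \<Theta> :: "('a \<times> 'b) measure" and h :: "'a \<times> 'b \<Rightarrow> real"
  assumes ergodic: "ergodic Q (shift_hat T)"
    and sets_\<Theta>: "sets \<Theta> = sets (M \<Otimes>\<^sub>M N)"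
    and disint: "\<And>H :: 'a \<times> 'b \<Rightarrow> ennreal. H \<in> borel_measurable (M \<Otimes>\<^sub>M N) \<Longrightarrow>
        (\<integral>\<^sup>+ z. H z \<partial>\<Theta>) = (\<integral>\<^sup>+ x. (\<integral>\<^sup>+ y. H (x, y) \<partial>K x) \<partial>M)"
    and h [measurable]: "h \<in> borel_measurable (M \<Otimes>\<^sub>M N)"
    and integrable: "integrable \<Theta> h" and mean_0: "(\<integral>z. h z \<partial>\<Theta>) = 0"
    and nonconst: "AE x in M. \<not> (\<exists>c. AE y in K x. h (x, y) = c)"
  shows "AE x in M. AE \<omega> in fibre_measure T K x.
    limsup (\<lambda>n. ereal (\<Sum>k<n. h ((T ^^ k) x, \<omega> k))) = \<infinity>"
proof -
  have zeroth: "(\<lambda>z. (fst z, snd z 0)) \<in> Q \<rightarrow>\<^sub>M M \<Otimes>\<^sub>M N"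
    by measurable
  have \<Theta>_eq: "distr Q (M \<Otimes>\<^sub>M N) (\<lambda>z. (fst z, snd z 0)) = \<Theta>"
    using sets_\<Theta> disint by (rule distr_Q_zeroth_coordinate)
  have [measurable]: "(\<lambda>z. limsup (\<lambda>n. ereal (skew_sum h n z))) \<in> borel_measurable (M \<Otimes>\<^sub>M \<Omega>)"
    using h by (rule borel_measurable_limsup_birkhoff_sum)
  have "AE z in Q. limsup (\<lambda>n. ereal (skew_sum h n z)) = \<infinity>"
  proof (rule limsup_birkhoff_sum_eq_PInfty[OF ergodic h nonconst])
    show "integrable Q (\<lambda>z. h (fst z, snd z 0))"
      using integrable integrable_distr_eq[OF zeroth, of h] by (simp add: \<Theta>_eq)
    show "(\<integral>z. h (fst z, snd z 0) \<partial>Q) = 0"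
      using mean_0 integral_distr[OF zeroth, of h] by (simp add: \<Theta>_eq)
  qed
  then show ?thesis
    by (subst (asm) AE_Q) (simp_all add: birkhoff_sum_shift_hat)
qed

end

theorem corollary1p7:
  fixes M :: "'a measure" and N :: "'b measure" and T :: "'a \<Rightarrow> 'a"
    and \<phi> :: "'a \<Rightarrow> 'b \<Rightarrow> 'b" and \<Theta> :: "('a \<times> 'b) measure"
    and K :: "'a \<Rightarrow> 'b measure" and h :: "'a \<times> 'b \<Rightarrow> real"
  assumes M_prob: "prob_space M"
    and T_mp: "preserves M T"
    and \<phi>_meas: "\<And>x. x \<in> space M \<Longrightarrow> \<phi> x \<in> N \<rightarrow>\<^sub>M N"
    and skew_meas: "(\<lambda>(x, y). (T x, \<phi> x y)) \<in> M \<Otimes>\<^sub>M N \<rightarrow>\<^sub>M M \<Otimes>\<^sub>M N"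
    and \<Theta>_prob: "prob_space \<Theta>"
    and \<Theta>_sets: "sets \<Theta> = sets (M \<Otimes>\<^sub>M N)"
    and \<Theta>_inv: "preserves \<Theta> (\<lambda>(x, y). (T x, \<phi> x y))"
    and \<Theta>_marg: "distr \<Theta> M fst = M"
    and K_kernel: "K \<in> M \<rightarrow>\<^sub>M prob_algebra N"
    and K_disint: "\<And>H :: 'a \<times> 'b \<Rightarrow> ennreal. H \<in> borel_measurable (M \<Otimes>\<^sub>M N) \<Longrightarrow>
        (\<integral>\<^sup>+ z. H z \<partial>\<Theta>) = (\<integral>\<^sup>+ x. (\<integral>\<^sup>+ y. H (x, y) \<partial>K x) \<partial>M)"
    and h_meas: "h \<in> borel_measurable (M \<Otimes>\<^sub>M N)"
    and nonconst: "AE x in M. \<not> (\<exists>c. AE y in K x. h (x, y) = c)"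
    and h_int: "integrable \<Theta> h"
    and h_mean: "(\<integral> z. h z \<partial>\<Theta>) = 0"
    and Q_erg: "ergodic (skew_measure M N T K) (shift_hat T)"
  shows "AE x in M. AE \<omega> in fibre_measure T K x.
           liminf (\<lambda>n. ereal (\<Sum>k<n. h ((T ^^ k) x, \<omega> k))) = -\<infinity> \<and>
           limsup (\<lambda>n. ereal (\<Sum>k<n. h ((T ^^ k) x, \<omega> k))) = \<infinity>"
proof -
  interpret skew_product M N T K
    using M_prob T_mp K_kernel by (rule skew_product.intro)
  have "AE x in M. \<not> (\<exists>c. AE y in K x. - h (x, y) = c)"
    using nonconst by (simp add: ex_AE_eq_const_uminus_iff)
  with h_meas h_int h_mean
  have "AE x in M. AE \<omega> in fibre_measure T K x.
      limsup (\<lambda>n. ereal (\<Sum>k<n. - h ((T ^^ k) x, \<omega> k))) = \<infinity>"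
    by (intro AE_fibre_limsup_sum_eq_PInfty[OF Q_erg \<Theta>_sets K_disint]) simp_all
  moreover have "AE x in M. AE \<omega> in fibre_measure T K x.
      limsup (\<lambda>n. ereal (\<Sum>k<n. h ((T ^^ k) x, \<omega> k))) = \<infinity>"
    by (rule AE_fibre_limsup_sum_eq_PInfty[OF Q_erg \<Theta>_sets K_disint h_meas h_int h_mean nonconst])
  ultimately show ?thesis
  proof eventually_elim
    case (elim x)
    then show ?case
      by eventually_elim (simp add: liminf_ereal_eq_uminus_limsup sum_negf)
  qed
qed

end
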